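(* Consider the multi-sender unicast index-coding instance with $N=5$ messages, $K=3$ senders with $\mathcal S_1=\{1,2,3\}$, $\mathcal S_2=\{2,3,4\}$, $\mathcal S_3=\{1,2,4,5\}$, each with link capacity $C_k=1$, and receiver side information $\mathcal A_1=\{4,5\}$, $\mathcal A_2=\{1,3,5\}$, $\mathcal A_3=\{1,2\}$, $\mathcal A_4=\{2,3,5\}$, $\mathcal A_5=\{3\}$. Its capacity region is $$\mathcal C=\left\{(R_1,\dots,R_5)\in\mathbb R_+^5:\begin{array}{l}R_3\le2,\ R_5\le1,\ R_1+R_3\le3,\ R_1+R_5\le2,\ R_4+R_5\le2,\\ R_1+R_2+R_5\le3,\ R_1+R_4+R_5\le3,\ R_2+R_4+R_5\le3,\ R_3+R_4+R_5\le3\end{array}\right\}.$$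
   Context: Model. $N$ independent messages $M_1,\dots,M_N$, $M_j$ uniform on $[1:2^{nR_j}]$ ($n$ the block length). Sender $k$ knows the messages $M_i$, $i\in\mathcal S_k$, and sends an index $L_k=f_k((M_i)_{i\in\mathcal S_k})\in[1:2^{nC_k})=\{1,\dots,2^{\lfloor nC_k\rfloor}\}$ over a noiseless broadcast link reaching all receivers. Receiver $j$ knows $M_i$, $i\in\mathcal A_j$, and must output an estimate $\hat M_j=g_j(L_1,\dots,L_K,(M_i)_{i\in\mathcal A_j})$ of $M_j$. A rate tuple is achievable if there exist such codes with $\Pr[(\hat M_1,\dots,\hat M_N)\ne(M_1,\dots,M_N)]\to0$ as $n\to\infty$; the capacity region $\mathcal C$ is the closure of the set of achievable rate tuples. *)

theory Defs
  imports "HOL-Analysis.Analysis"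
begin

text \<open>Messages are indexed by 1..N, senders by 1..K.  A rate tuple is a function
  nat => real; only the coordinates 1..N are relevant.
  The index set [1:2^{nR}) is {1, ..., 2^{floor(n R)}}.\<close>

definition idx_set :: "nat \<Rightarrow> real \<Rightarrow> nat set" where
  "idx_set n r = {1..2 ^ nat \<lfloor>real n * r\<rfloor>}"

definition msg_tuples :: "nat \<Rightarrow> nat \<Rightarrow> (nat \<Rightarrow> real) \<Rightarrow> (nat \<Rightarrow> nat) set" where
  "msg_tuples N n R = PiE {1..N} (\<lambda>j. idx_set n (R j))"

text \<open>Encoder of sender k: f k applied to the messages restricted to S k,
  so it depends only on (M_i)_{i in S k}.  Decoder of receiver j: g j applied
  to the vector of broadcast indices (L_1,...,L_K) and to the messages
  restricted to A j.\<close>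
definition broadcast ::
  "nat \<Rightarrow> (nat \<Rightarrow> nat set) \<Rightarrow> (nat \<Rightarrow> (nat \<Rightarrow> nat) \<Rightarrow> nat) \<Rightarrow> (nat \<Rightarrow> nat) \<Rightarrow> (nat \<Rightarrow> nat)" where
  "broadcast K S f m = restrict (\<lambda>k. f k (restrict m (S k))) {1..K}"

definition valid_code ::
  "nat \<Rightarrow> nat \<Rightarrow> (nat \<Rightarrow> nat set) \<Rightarrow> (nat \<Rightarrow> real) \<Rightarrow> (nat \<Rightarrow> real) \<Rightarrow> nat
   \<Rightarrow> (nat \<Rightarrow> (nat \<Rightarrow> nat) \<Rightarrow> nat) \<Rightarrow> bool" where
  "valid_code N K S C R n f \<longleftrightarrow>
     (\<forall>k\<in>{1..K}. \<forall>m\<in>msg_tuples N n R. f k (restrict m (S k)) \<in> idx_set n (C k))"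

definition error_prob ::
  "nat \<Rightarrow> nat \<Rightarrow> (nat \<Rightarrow> nat set) \<Rightarrow> (nat \<Rightarrow> nat set) \<Rightarrow> (nat \<Rightarrow> real) \<Rightarrow> nat
   \<Rightarrow> (nat \<Rightarrow> (nat \<Rightarrow> nat) \<Rightarrow> nat)
   \<Rightarrow> (nat \<Rightarrow> (nat \<Rightarrow> nat) \<Rightarrow> (nat \<Rightarrow> nat) \<Rightarrow> nat) \<Rightarrow> real" where
  "error_prob N K S A R n f g =
     real (card {m \<in> msg_tuples N n R.
                  \<exists>j\<in>{1..N}. g j (broadcast K S f m) (restrict m (A j)) \<noteq> m j})
     / real (card (msg_tuples N n R))"

definition achievable ::
  "nat \<Rightarrow> nat \<Rightarrow> (nat \<Rightarrow> nat set) \<Rightarrow> (nat \<Rightarrow> nat set) \<Rightarrow> (nat \<Rightarrow> real) \<Rightarrow> (nat \<Rightarrow> real) \<Rightarrow> bool" where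
  "achievable N K S A C R \<longleftrightarrow>
     (\<forall>j\<in>{1..N}. R j \<ge> 0) \<and>
     (\<exists>(f :: nat \<Rightarrow> nat \<Rightarrow> (nat \<Rightarrow> nat) \<Rightarrow> nat)
        (g :: nat \<Rightarrow> nat \<Rightarrow> (nat \<Rightarrow> nat) \<Rightarrow> (nat \<Rightarrow> nat) \<Rightarrow> nat).
        (\<forall>n. valid_code N K S C R n (f n)) \<and>
        (\<lambda>n. error_prob N K S A R n (f n) (g n)) \<longlonglongrightarrow> 0)"

text \<open>Capacity region: closure (product topology on nat => real) of the achievable tuples.\<close>
definition capacity_region ::
  "nat \<Rightarrow> nat \<Rightarrow> (nat \<Rightarrow> nat set) \<Rightarrow> (nat \<Rightarrow> nat set) \<Rightarrow> (nat \<Rightarrow> real) \<Rightarrow> (nat \<Rightarrow> real) set" where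
  "capacity_region N K S A C = closure {R. achievable N K S A C R}"

end

theory Submission
  imports Defs "HOL-Library.More_List"
begin

text \<open>
  Achievability: the region is the down-closure of the convex hull of nine corner points, each of
  which is attained without error by an explicit code that sends XORs of message bits over one or two
  uses of the links.  Concatenating repetitions of these codes in proportions approximating the convex
  weights (time-sharing) achieves every rate tuple strictly inside the region, hence the region lies
  in the closure of the achievable tuples.

  Converse: for each of the nine inequalities there are a set \<open>X\<close> of messages and a set \<open>s\<close> of
  links such that the links outside \<open>s\<close> only depend on the messages in \<open>X\<close>, while from \<open>X\<close> and the
  links in \<open>s\<close> the remaining receivers can decode one after the other.  A correctly decoded message
  tuple is thus determined by its messages in \<open>X\<close> and the indices on the links in \<open>s\<close>; counting
  shows that a rate tuple violating the inequality forces the error probability towards \<open>1\<close>.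
\<close>

section \<open>Bit strings\<close>

definition bits :: "nat \<Rightarrow> (nat \<Rightarrow> bool) set" where
  "bits r = {x. \<forall>i\<ge>r. \<not> x i}"

lemma bits_mono: "r \<le> r' \<Longrightarrow> bits r \<subseteq> bits r'"
  unfolding bits_def by auto

lemma bij_betw_bits_Pow: "bij_betw (\<lambda>x. {i. x i}) (bits r) (Pow {..<r})"
proof (rule bij_betwI[where g = "\<lambda>B i. i \<in> B"])
  show "(\<lambda>x. {i. x i}) \<in> bits r \<rightarrow> Pow {..<r}"
    unfolding bits_def by (auto simp: not_le[symmetric])
  show "(\<lambda>B i. i \<in> B) \<in> Pow {..<r} \<rightarrow> bits r"
    unfolding bits_def by auto
qed auto

lemma finite_bits: "finite (bits r)"
  using bij_betw_finite[OF bij_betw_bits_Pow] by simp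

lemma card_bits: "card (bits r) = 2 ^ r"
  using bij_betw_same_card[OF bij_betw_bits_Pow] by (simp add: card_Pow)

lemma nth_default_in_bits: "length bs \<le> r \<Longrightarrow> nth_default False bs \<in> bits r"
  unfolding bits_def by (auto simp: nth_default_def)

lemma nth_default_map_upt: "x \<in> bits r \<Longrightarrow> nth_default False (map x [0..<r]) = x"
  unfolding bits_def by (auto simp: nth_default_def fun_eq_iff not_less)

definition bits_of_index :: "nat \<Rightarrow> nat \<Rightarrow> bool" where
  "bits_of_index x = bit (x - 1)"

lemma bits_of_index_in_bits:
  assumes "x \<in> {1..2 ^ r}"
  shows "bits_of_index x \<in> bits r"
proof -
  have "take_bit r (x - 1) = x - 1"
    using assms by (auto simp: take_bit_nat_eq_self_iff)
  then have "\<not> bit (x - 1) i" if "r \<le> i" for i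
    using that by (metis bit_take_bit_iff not_le)
  then show ?thesis
    unfolding bits_def bits_of_index_def by simp
qed

lemma inj_on_bits_of_index: "inj_on bits_of_index {1..m}"
proof (rule inj_onI)
  fix x y assume "x \<in> {1..m}" "y \<in> {1..m}" "bits_of_index x = bits_of_index y"
  moreover from this(3) have "x - 1 = y - 1"
    unfolding bits_of_index_def by (metis bit_eq_iff)
  ultimately show "x = y" by auto
qed

lemma bits_of_index_image: "bits_of_index ` {1..2 ^ r} = bits r"
proof (rule card_subset_eq)
  show "bits_of_index ` {1..2 ^ r} \<subseteq> bits r"
    using bits_of_index_in_bits by auto
  show "card (bits_of_index ` {1..2 ^ r}) = card (bits r)"
    using card_image[OF inj_on_bits_of_index] by (simp add: card_bits)
qed (rule finite_bits)

definition take_bits :: "nat \<Rightarrow> (nat \<Rightarrow> bool) \<Rightarrow> nat \<Rightarrow> bool" where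
  "take_bits r x = (\<lambda>i. i < r \<and> x i)"

definition drop_bits :: "nat \<Rightarrow> (nat \<Rightarrow> bool) \<Rightarrow> nat \<Rightarrow> bool" where
  "drop_bits r x = (\<lambda>i. x (i + r))"

definition append_bits :: "nat \<Rightarrow> (nat \<Rightarrow> bool) \<Rightarrow> (nat \<Rightarrow> bool) \<Rightarrow> nat \<Rightarrow> bool" where
  "append_bits r x y = (\<lambda>i. if i < r then x i else y (i - r))"

lemma take_bits_in_bits: "take_bits r x \<in> bits r"
  unfolding take_bits_def bits_def by auto

lemma drop_bits_in_bits: "x \<in> bits (r + r') \<Longrightarrow> drop_bits r x \<in> bits r'"
  unfolding drop_bits_def bits_def by auto

lemma append_bits_in_bits: "x \<in> bits r \<Longrightarrow> y \<in> bits r' \<Longrightarrow> append_bits r x y \<in> bits (r + r')"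
  unfolding append_bits_def bits_def by auto

lemma append_take_drop_bits: "append_bits r (take_bits r x) (drop_bits r x) = x"
  unfolding append_bits_def take_bits_def drop_bits_def by auto

lemma take_append_bits: "x \<in> bits r \<Longrightarrow> take_bits r (append_bits r x y) = x"
  unfolding append_bits_def take_bits_def bits_def by (auto simp: fun_eq_iff not_less)

lemma drop_append_bits: "drop_bits r (append_bits r x y) = y"
  unfolding append_bits_def drop_bits_def by auto

section \<open>Zero-error codes\<close>

text \<open>A \<open>zero_error_code\<close> transmits \<open>r j\<close> bits of
  message \<open>j\<close> in a single use of the links, sender \<open>k\<close> broadcasting \<open>u k\<close> bits.\<close>

definition zero_error_code ::
  "nat \<Rightarrow> nat \<Rightarrow> (nat \<Rightarrow> nat set) \<Rightarrow> (nat \<Rightarrow> nat set) \<Rightarrow> (nat \<Rightarrow> nat) \<Rightarrow> (nat \<Rightarrow> nat) \<Rightarrow> bool" where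
  "zero_error_code N K S A r u \<longleftrightarrow>
    (\<exists>(F :: nat \<Rightarrow> (nat \<Rightarrow> nat \<Rightarrow> bool) \<Rightarrow> nat \<Rightarrow> bool)
       (G :: nat \<Rightarrow> (nat \<Rightarrow> nat \<Rightarrow> bool) \<Rightarrow> (nat \<Rightarrow> nat \<Rightarrow> bool) \<Rightarrow> nat \<Rightarrow> bool).
      \<forall>m \<in> PiE {1..N} (\<lambda>j. bits (r j)).
        (\<forall>k\<in>{1..K}. F k (restrict m (S k)) \<in> bits (u k)) \<and>
        (\<forall>j\<in>{1..N}. G j (restrict (\<lambda>k. F k (restrict m (S k))) {1..K}) (restrict m (A j)) = m j))"

lemma zero_error_codeE:
  assumes "zero_error_code N K S A r u"
  obtains F G where
    "\<And>m k. m \<in> PiE {1..N} (\<lambda>j. bits (r j)) \<Longrightarrow> k \<in> {1..K} \<Longrightarrow> F k (restrict m (S k)) \<in> bits (u k)"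
    "\<And>m j. m \<in> PiE {1..N} (\<lambda>j. bits (r j)) \<Longrightarrow> j \<in> {1..N} \<Longrightarrow>
      G j (restrict (\<lambda>k. F k (restrict m (S k))) {1..K}) (restrict m (A j)) = m j"
proof -
  from assms obtain F G where "\<forall>m \<in> PiE {1..N} (\<lambda>j. bits (r j)).
      (\<forall>k\<in>{1..K}. F k (restrict m (S k)) \<in> bits (u k)) \<and>
      (\<forall>j\<in>{1..N}. G j (restrict (\<lambda>k. F k (restrict m (S k))) {1..K}) (restrict m (A j)) = m j)"
    unfolding zero_error_code_def by blast
  then show thesis
    by (intro that[of F G]) (blast, blast)
qed

lemma zero_error_code_zero: "zero_error_code N K S A (\<lambda>_. 0) (\<lambda>_. 0)"
  unfolding zero_error_code_def
  by (rule exI[of _ "\<lambda>k M i. False"], rule exI[of _ "\<lambda>j L M i. False"])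
     (auto simp: bits_def fun_eq_iff PiE_iff)

lemma zero_error_code_of_bit_lists:
  fixes enc :: "nat \<Rightarrow> (nat \<Rightarrow> nat \<Rightarrow> bool) \<Rightarrow> bool list"
    and dec :: "nat \<Rightarrow> (nat \<Rightarrow> nat \<Rightarrow> bool) \<Rightarrow> (nat \<Rightarrow> nat \<Rightarrow> bool) \<Rightarrow> bool list"
  assumes enc: "\<forall>k\<in>{1..K}. \<forall>M. length (enc k M) \<le> u k"
    and dec: "\<forall>j\<in>{1..N}. \<forall>m.
      dec j (restrict (\<lambda>k. nth_default False (enc k (restrict m (S k)))) {1..K}) (restrict m (A j))
        = map (m j) [0..<r j]"
  shows "zero_error_code N K S A r u"
  unfolding zero_error_code_def
proof (intro exI ballI conjI)
  fix m assume m: "m \<in> PiE {1..N} (\<lambda>j. bits (r j))"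
  show "nth_default False (enc k (restrict m (S k))) \<in> bits (u k)" if "k \<in> {1..K}" for k
    using enc that by (intro nth_default_in_bits) blast
  show "nth_default False (dec j (restrict (\<lambda>k. nth_default False (enc k (restrict m (S k)))) {1..K})
      (restrict m (A j))) = m j" if "j \<in> {1..N}" for j
    using dec m that by (subst nth_default_map_upt[symmetric]) auto
qed

locale index_coding =
  fixes N K :: nat and S A :: "nat \<Rightarrow> nat set"
  assumes senders_known: "\<And>k. k \<in> {1..K} \<Longrightarrow> S k \<subseteq> {1..N}"
    and side_info_known: "\<And>j. j \<in> {1..N} \<Longrightarrow> A j \<subseteq> {1..N}"
begin

lemma zero_error_code_add:
  assumes "zero_error_code N K S A r u" and "zero_error_code N K S A r' u'"
  shows "zero_error_code N K S A (\<lambda>j. r j + r' j) (\<lambda>k. u k + u' k)"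
proof -
  obtain F G where
    F: "\<And>m k. m \<in> PiE {1..N} (\<lambda>j. bits (r j)) \<Longrightarrow> k \<in> {1..K} \<Longrightarrow> F k (restrict m (S k)) \<in> bits (u k)" and
    G: "\<And>m j. m \<in> PiE {1..N} (\<lambda>j. bits (r j)) \<Longrightarrow> j \<in> {1..N} \<Longrightarrow>
      G j (restrict (\<lambda>k. F k (restrict m (S k))) {1..K}) (restrict m (A j)) = m j"
    using zero_error_codeE[OF assms(1)] by blast
  obtain F' G' where
    F': "\<And>m k. m \<in> PiE {1..N} (\<lambda>j. bits (r' j)) \<Longrightarrow> k \<in> {1..K} \<Longrightarrow> F' k (restrict m (S k)) \<in> bits (u' k)" and
    G': "\<And>m j. m \<in> PiE {1..N} (\<lambda>j. bits (r' j)) \<Longrightarrow> j \<in> {1..N} \<Longrightarrow>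
      G' j (restrict (\<lambda>k. F' k (restrict m (S k))) {1..K}) (restrict m (A j)) = m j"
    using zero_error_codeE[OF assms(2)] by blast
  \<comment> \<open>The first code runs on the leading bits of every message and link, the second one on the rest.\<close>
  define F2 where "F2 k M = append_bits (u k) (F k (restrict (\<lambda>j. take_bits (r j) (M j)) (S k)))
      (F' k (restrict (\<lambda>j. drop_bits (r j) (M j)) (S k)))" for k M
  define G2 where "G2 j L M = append_bits (r j)
      (G j (restrict (\<lambda>k. take_bits (u k) (L k)) {1..K}) (restrict (\<lambda>i. take_bits (r i) (M i)) (A j)))
      (G' j (restrict (\<lambda>k. drop_bits (u k) (L k)) {1..K}) (restrict (\<lambda>i. drop_bits (r i) (M i)) (A j)))"
    for j L M
  have "(\<forall>k\<in>{1..K}. F2 k (restrict m (S k)) \<in> bits (u k + u' k)) \<and>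
    (\<forall>j\<in>{1..N}. G2 j (restrict (\<lambda>k. F2 k (restrict m (S k))) {1..K}) (restrict m (A j)) = m j)"
    if m: "m \<in> PiE {1..N} (\<lambda>j. bits (r j + r' j))" for m
  proof -
    define m1 where "m1 = restrict (\<lambda>j. take_bits (r j) (m j)) {1..N}"
    define m2 where "m2 = restrict (\<lambda>j. drop_bits (r j) (m j)) {1..N}"
    have m1: "m1 \<in> PiE {1..N} (\<lambda>j. bits (r j))"
      unfolding m1_def using take_bits_in_bits by auto
    have m2: "m2 \<in> PiE {1..N} (\<lambda>j. bits (r' j))"
      unfolding m2_def using drop_bits_in_bits m by auto
    have split: "restrict (\<lambda>i. take_bits (r i) (restrict m I i)) I = restrict m1 I"
      "restrict (\<lambda>i. drop_bits (r i) (restrict m I i)) I = restrict m2 I"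
      if "I \<subseteq> {1..N}" for I
      using that by (auto simp: m1_def m2_def fun_eq_iff)
    have F2: "F2 k (restrict m (S k)) =
        append_bits (u k) (F k (restrict m1 (S k))) (F' k (restrict m2 (S k)))" if "k \<in> {1..K}" for k
      unfolding F2_def split[OF senders_known[OF that]] ..
    have L1: "restrict (\<lambda>k. take_bits (u k) (restrict (\<lambda>k. F2 k (restrict m (S k))) {1..K} k)) {1..K}
        = restrict (\<lambda>k. F k (restrict m1 (S k))) {1..K}"
      by (rule restrict_ext) (simp add: F2 F[OF m1] take_append_bits)
    have L2: "restrict (\<lambda>k. drop_bits (u k) (restrict (\<lambda>k. F2 k (restrict m (S k))) {1..K} k)) {1..K}
        = restrict (\<lambda>k. F' k (restrict m2 (S k))) {1..K}"
      by (rule restrict_ext) (simp add: F2 drop_append_bits)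
    show ?thesis
    proof (intro conjI ballI)
      show "F2 k (restrict m (S k)) \<in> bits (u k + u' k)" if "k \<in> {1..K}" for k
        unfolding F2[OF that] using F[OF m1 that] F'[OF m2 that] by (rule append_bits_in_bits)
      fix j assume j: "j \<in> {1..N}"
      have "G2 j (restrict (\<lambda>k. F2 k (restrict m (S k))) {1..K}) (restrict m (A j))
          = append_bits (r j) (m1 j) (m2 j)"
        unfolding G2_def L1 L2 split[OF side_info_known[OF j]] G[OF m1 j] G'[OF m2 j] ..
      also have "\<dots> = m j"
        unfolding m1_def m2_def using j append_take_drop_bits by simp
      finally show "G2 j (restrict (\<lambda>k. F2 k (restrict m (S k))) {1..K}) (restrict m (A j)) = m j" .
    qed
  qed
  then show ?thesis
    unfolding zero_error_code_def by blast
qed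

lemma zero_error_code_scale:
  assumes "zero_error_code N K S A r u"
  shows "zero_error_code N K S A (\<lambda>j. q * r j) (\<lambda>k. q * u k)"
proof (induction q)
  case 0
  show ?case using zero_error_code_zero by simp
next
  case (Suc q)
  from zero_error_code_add[OF assms Suc] show ?case by (simp add: add.commute)
qed

lemma zero_error_code_sum:
  assumes "finite I" and "\<And>i. i \<in> I \<Longrightarrow> zero_error_code N K S A (r i) (u i)"
  shows "zero_error_code N K S A (\<lambda>j. \<Sum>i\<in>I. p i * r i j) (\<lambda>k. \<Sum>i\<in>I. p i * u i k)"
  using assms
proof (induction I rule: finite_induct)
  case empty
  show ?case using zero_error_code_zero by simp
next
  case (insert i I)
  have "zero_error_code N K S A (\<lambda>j. p i * r i j) (\<lambda>k. p i * u i k)"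
    by (rule zero_error_code_scale) (simp add: insert.prems)
  moreover have "zero_error_code N K S A (\<lambda>j. \<Sum>i\<in>I. p i * r i j) (\<lambda>k. \<Sum>i\<in>I. p i * u i k)"
    using insert.IH insert.prems by blast
  ultimately show ?case
    using zero_error_code_add insert.hyps by fastforce
qed

end

section \<open>Achievability by time-sharing\<close>

lemma eventually_nat_floor_le_div_mult:
  fixes T r :: nat and x :: real
  assumes T: "0 < T" and x: "0 \<le> x" "x = 0 \<or> x * T < r"
  shows "eventually (\<lambda>n. nat \<lfloor>real n * x\<rfloor> \<le> (n div T) * r) sequentially"
proof (cases "x = 0")
  case False
  define d where "d = real r - x * T"
  have d: "0 < d" using False x unfolding d_def by simp
  show ?thesis unfolding eventually_sequentially
  proof (intro exI allI impI)
    fix n assume "nat \<lceil>real r * T / d\<rceil> \<le> n"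
    then have "real r * T / d \<le> real n" by linarith
    then have n: "real r * T \<le> real n * d" using d by (simp add: divide_le_eq)
    have "real n \<le> real T * real (n div T) + real T"
      using div_mult_mod_eq[of n T] mod_less_divisor[OF T, of n]
      by (metis add_le_mono le_refl less_imp_le_nat mult.commute of_nat_add of_nat_le_iff of_nat_mult)
    then have q: "real n - T \<le> real (n div T) * T" by (simp add: algebra_simps)
    have "real n * x * T = real n * r - real n * d" unfolding d_def by (simp add: algebra_simps)
    also have "\<dots> \<le> (real n - T) * r" using n by (simp add: algebra_simps)
    also have "\<dots> \<le> real (n div T) * T * r" using q by (intro mult_right_mono) auto
    finally have "real n * x \<le> real ((n div T) * r)"
      using T by (simp add: mult.commute mult.left_commute)
    moreover have "real (nat \<lfloor>real n * x\<rfloor>) \<le> real n * x" using x by simp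
    ultimately show "nat \<lfloor>real n * x\<rfloor> \<le> (n div T) * r" by linarith
  qed
qed simp

context index_coding
begin

lemma valid_code_of_zero_error_code:
  assumes code: "zero_error_code N K S A r u"
    and links: "\<And>k. k \<in> {1..K} \<Longrightarrow> u k \<le> nat \<lfloor>real n * C k\<rfloor>"
    and msgs: "\<And>j. j \<in> {1..N} \<Longrightarrow> nat \<lfloor>real n * R j\<rfloor> \<le> r j"
  obtains f g where "valid_code N K S C R n f" and "error_prob N K S A R n f g = 0"
proof -
  obtain F G where
    F: "\<And>m k. m \<in> PiE {1..N} (\<lambda>j. bits (r j)) \<Longrightarrow> k \<in> {1..K} \<Longrightarrow> F k (restrict m (S k)) \<in> bits (u k)" and
    G: "\<And>m j. m \<in> PiE {1..N} (\<lambda>j. bits (r j)) \<Longrightarrow> j \<in> {1..N} \<Longrightarrow>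
      G j (restrict (\<lambda>k. F k (restrict m (S k))) {1..K}) (restrict m (A j)) = m j"
    using zero_error_codeE[OF code] by blast
  define b where "b j = nat \<lfloor>real n * R j\<rfloor>" for j
  define c where "c k = nat \<lfloor>real n * C k\<rfloor>" for k
  define bin where "bin m = restrict (\<lambda>i. bits_of_index (m i)) {1..N}" for m :: "nat \<Rightarrow> nat"
  define f where
    "f k M = inv_into {1..2 ^ c k} bits_of_index (F k (restrict (\<lambda>i. bits_of_index (M i)) (S k)))" for k M
  define g where "g j L M = inv_into {1..2 ^ b j} bits_of_index
      (G j (restrict (\<lambda>k. bits_of_index (L k)) {1..K}) (restrict (\<lambda>i. bits_of_index (M i)) (A j)))"
    for j L M
  have bin_restrict: "restrict (\<lambda>i. bits_of_index (restrict m I i)) I = restrict (bin m) I"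
    if "I \<subseteq> {1..N}" for m I
    using that by (auto simp: bin_def fun_eq_iff)
  have m_idx: "m i \<in> {1..2 ^ b i}" if "m \<in> msg_tuples N n R" "i \<in> {1..N}" for m i
    using that unfolding msg_tuples_def idx_set_def b_def by auto
  have bin: "bin m \<in> PiE {1..N} (\<lambda>j. bits (r j))" if "m \<in> msg_tuples N n R" for m
  proof -
    have "bits_of_index (m i) \<in> bits (r i)" if "i \<in> {1..N}" for i
      using bits_of_index_in_bits[OF m_idx] bits_mono[OF msgs[folded b_def]] \<open>m \<in> msg_tuples N n R\<close> that
      by blast
    then show ?thesis
      unfolding bin_def by auto
  qed
  have link: "f k (restrict m (S k)) \<in> {1..2 ^ c k} \<and>
      bits_of_index (f k (restrict m (S k))) = F k (restrict (bin m) (S k))"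
    if m: "m \<in> msg_tuples N n R" and k: "k \<in> {1..K}" for m k
  proof -
    have "F k (restrict (bin m) (S k)) \<in> bits_of_index ` {1..2 ^ c k}"
      using F[OF bin[OF m] k] bits_mono[OF links[OF k, folded c_def]] unfolding bits_of_index_image by blast
    then show ?thesis
      unfolding f_def bin_restrict[OF senders_known[OF k]] using inv_into_into f_inv_into_f by metis
  qed
  have decode: "g j (broadcast K S f m) (restrict m (A j)) = m j"
    if m: "m \<in> msg_tuples N n R" and j: "j \<in> {1..N}" for m j
  proof -
    have "restrict (\<lambda>k. bits_of_index (broadcast K S f m k)) {1..K} =
        restrict (\<lambda>k. F k (restrict (bin m) (S k))) {1..K}"
      using link[OF m] unfolding broadcast_def by (intro restrict_ext) simp
    then have "G j (restrict (\<lambda>k. bits_of_index (broadcast K S f m k)) {1..K})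
        (restrict (\<lambda>i. bits_of_index (restrict m (A j) i)) (A j)) = bits_of_index (m j)"
      using G[OF bin[OF m] j] j unfolding bin_restrict[OF side_info_known[OF j]] by (simp add: bin_def)
    then show ?thesis
      unfolding g_def using inv_into_f_f[OF inj_on_bits_of_index m_idx[OF m j]] by simp
  qed
  show thesis
  proof (rule that[of f g])
    show "valid_code N K S C R n f"
      unfolding valid_code_def idx_set_def c_def[symmetric] using link by blast
    have no_errors:
      "{m \<in> msg_tuples N n R. \<exists>j\<in>{1..N}. g j (broadcast K S f m) (restrict m (A j)) \<noteq> m j} = {}"
      using decode by blast
    show "error_prob N K S A R n f g = 0"
      unfolding error_prob_def no_errors by simp
  qed
qed

lemma achievable_of_zero_error_code:
  fixes R C :: "nat \<Rightarrow> real"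
  assumes code: "zero_error_code N K S A r u" and T: "0 < T"
    and links: "\<And>k. k \<in> {1..K} \<Longrightarrow> real (u k) \<le> real T * C k"
    and rates: "\<And>j. j \<in> {1..N} \<Longrightarrow> 0 \<le> R j \<and> (R j = 0 \<or> R j * T < r j)"
  shows "achievable N K S A C R"
proof -
  define good where "good n \<longleftrightarrow> (\<forall>j\<in>{1..N}. nat \<lfloor>real n * R j\<rfloor> \<le> (n div T) * r j)" for n
  \<comment> \<open>At block length \<open>n\<close> the code is repeated \<open>n div T\<close> times; if that is too short, any valid code.\<close>
  have "\<exists>f g. valid_code N K S C R n f \<and> (good n \<longrightarrow> error_prob N K S A R n f g = 0)" for n
  proof (cases "good n")
    case True
    have "(n div T) * u k \<le> nat \<lfloor>real n * C k\<rfloor>" if "k \<in> {1..K}" for k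
    proof (rule le_nat_floor)
      have "0 \<le> real T * C k" using links[OF that] of_nat_0_le_iff order_trans by blast
      then have "0 \<le> C k" using T by (simp add: zero_le_mult_iff)
      have "real (n div T) * u k \<le> real (n div T) * (T * C k)"
        using links[OF that] by (simp add: mult_left_mono)
      also have "\<dots> = real ((n div T) * T) * C k" by simp
      also have "\<dots> \<le> real n * C k"
        using \<open>0 \<le> C k\<close> by (intro mult_right_mono) (simp_all only: of_nat_le_iff div_times_less_eq_dividend)
      finally show "real ((n div T) * u k) \<le> real n * C k" by simp
    qed
    moreover have "nat \<lfloor>real n * R j\<rfloor> \<le> (n div T) * r j" if "j \<in> {1..N}" for j
      using True that unfolding good_def by blast
    ultimately obtain f g where "valid_code N K S C R n f" "error_prob N K S A R n f g = 0"
      by (rule valid_code_of_zero_error_code[OF zero_error_code_scale[OF code]])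
    then show ?thesis by blast
  next
    case False
    have "valid_code N K S C R n (\<lambda>k M. 1)"
      unfolding valid_code_def idx_set_def by auto
    with False show ?thesis by blast
  qed
  then obtain f g where
    valid: "\<And>n. valid_code N K S C R n (f n)" and
    zero: "\<And>n. good n \<Longrightarrow> error_prob N K S A R n (f n) (g n) = 0"
    by (metis (no_types))
  have "eventually good sequentially"
    unfolding good_def using rates
    by (intro eventually_ball_finite ballI eventually_nat_floor_le_div_mult[OF T]) auto
  then have "eventually (\<lambda>n. error_prob N K S A R n (f n) (g n) = 0) sequentially"
    by (rule eventually_mono) (rule zero)
  then have "(\<lambda>n. error_prob N K S A R n (f n) (g n)) \<longlonglongrightarrow> 0"
    by (rule tendsto_eventually)
  then show ?thesis
    unfolding achievable_def using valid rates by blast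
qed

lemma achievable_time_sharing:
  fixes R C :: "nat \<Rightarrow> real" and lam :: "'i \<Rightarrow> real"
  assumes I: "finite I"
    and codes: "\<And>i. i \<in> I \<Longrightarrow> zero_error_code N K S A (r i) (u i)"
    and len: "\<And>i. i \<in> I \<Longrightarrow> 0 < t i"
    and links: "\<And>i k. i \<in> I \<Longrightarrow> k \<in> {1..K} \<Longrightarrow> real (u i k) \<le> real (t i) * C k"
    and C: "\<And>k. k \<in> {1..K} \<Longrightarrow> 0 \<le> C k"
    and lam: "\<And>i. i \<in> I \<Longrightarrow> 0 \<le> lam i" and lam_sum: "(\<Sum>i\<in>I. lam i) \<le> 1"
    and rates: "\<And>j. j \<in> {1..N} \<Longrightarrow> 0 \<le> R j \<and> (R j = 0 \<or> R j < (\<Sum>i\<in>I. lam i * r i j / t i))"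
  shows "achievable N K S A C R"
proof -
  \<comment> \<open>Over \<open>M\<close> channel uses, code \<open>i\<close> is run \<open>p M i \<approx> M lam i / t i\<close> times.\<close>
  define p where "p M i = nat \<lfloor>real M * lam i / t i\<rfloor>" for M i
  have p_le: "real (p M i) \<le> real M * lam i / t i" if "i \<in> I" for M i
    using lam[OF that] len[OF that] unfolding p_def by simp
  have p_ge: "real M * lam i / t i - 1 \<le> real (p M i)" for M i
    unfolding p_def by linarith
  have links': "real (\<Sum>i\<in>I. p M i * u i k) \<le> real M * C k" if k: "k \<in> {1..K}" for M k
  proof -
    have "real (\<Sum>i\<in>I. p M i * u i k) \<le> (\<Sum>i\<in>I. real M * lam i / t i * (t i * C k))"
      unfolding of_nat_sum of_nat_mult
      using p_le links[OF _ k] lam len by (intro sum_mono mult_mono) auto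
    also have "\<dots> = (\<Sum>i\<in>I. real M * C k * lam i)"
    proof (intro sum.cong refl)
      fix i assume "i \<in> I"
      then have "real (t i) \<noteq> 0" using len by simp
      then show "real M * lam i / t i * (t i * C k) = real M * C k * lam i" by (simp add: field_simps)
    qed
    also have "\<dots> = real M * C k * (\<Sum>i\<in>I. lam i)"
      by (simp add: sum_distrib_left)
    also have "\<dots> \<le> real M * C k"
      using lam_sum C[OF k] by (simp add: mult_left_le)
    finally show ?thesis .
  qed
  have "eventually (\<lambda>M. R j = 0 \<or> R j * real M < real (\<Sum>i\<in>I. p M i * r i j)) sequentially"
    if j: "j \<in> {1..N}" for j
  proof (cases "R j = 0")
    case False
    define gap where "gap = (\<Sum>i\<in>I. lam i * r i j / t i) - R j"
    have gap: "0 < gap" using rates[OF j] False unfolding gap_def by simp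
    obtain M0 :: nat where M0: "(\<Sum>i\<in>I. real (r i j)) / gap < M0"
      using reals_Archimedean2 by blast
    show ?thesis unfolding eventually_sequentially
    proof (intro exI allI impI disjI2)
      fix M assume "M0 \<le> M"
      with M0 have "(\<Sum>i\<in>I. real (r i j)) / gap < real M"
        by (meson le_less_trans less_le_trans of_nat_le_iff)
      with gap have "(\<Sum>i\<in>I. real (r i j)) < real M * gap"
        by (simp add: divide_less_eq)
      also have "real M * gap = (\<Sum>i\<in>I. (real M * lam i / t i) * r i j) - R j * M"
        unfolding gap_def by (simp add: sum_distrib_left algebra_simps)
      finally have "R j * M < (\<Sum>i\<in>I. (real M * lam i / t i - 1) * r i j)"
        by (simp add: sum_subtractf left_diff_distrib)
      also have "\<dots> \<le> real (\<Sum>i\<in>I. p M i * r i j)"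
        unfolding of_nat_sum of_nat_mult using p_ge by (intro sum_mono mult_right_mono) auto
      finally show "R j * real M < real (\<Sum>i\<in>I. p M i * r i j)" .
    qed
  qed simp
  then have "eventually (\<lambda>M. 0 < M \<and> (\<forall>j\<in>{1..N}. R j = 0 \<or> R j * real M < real (\<Sum>i\<in>I. p M i * r i j)))
      sequentially"
    by (intro eventually_conj eventually_ball_finite eventually_gt_at_top) auto
  then obtain M where M: "0 < M" "\<And>j. j \<in> {1..N} \<Longrightarrow> R j = 0 \<or> R j * real M < real (\<Sum>i\<in>I. p M i * r i j)"
    unfolding eventually_sequentially by blast
  show ?thesis
    by (rule achievable_of_zero_error_code[OF zero_error_code_sum[OF I codes] M(1) links'])
       (use rates M(2) in blast)+
qed

lemma capacity_region_time_sharing: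
  fixes R C :: "nat \<Rightarrow> real" and lam :: "'i \<Rightarrow> real"
  assumes I: "finite I"
    and codes: "\<And>i. i \<in> I \<Longrightarrow> zero_error_code N K S A (r i) (u i)"
    and len: "\<And>i. i \<in> I \<Longrightarrow> 0 < t i"
    and links: "\<And>i k. i \<in> I \<Longrightarrow> k \<in> {1..K} \<Longrightarrow> real (u i k) \<le> real (t i) * C k"
    and C: "\<And>k. k \<in> {1..K} \<Longrightarrow> 0 \<le> C k"
    and lam: "\<And>i. i \<in> I \<Longrightarrow> 0 \<le> lam i" and lam_sum: "(\<Sum>i\<in>I. lam i) \<le> 1"
    and rates: "\<And>j. j \<in> {1..N} \<Longrightarrow> 0 \<le> R j \<and> R j \<le> (\<Sum>i\<in>I. lam i * r i j / t i)"
  shows "R \<in> capacity_region N K S A C"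
proof -
  define shrink where "shrink s = (\<lambda>j. if j \<in> {1..N} then s * R j else R j)" for s :: real
  have "shrink s \<in> {R. achievable N K S A C R}" if s: "0 \<le> s" "s < 1" for s
  proof (intro CollectI achievable_time_sharing[OF I codes len links C lam lam_sum])
    fix j :: nat assume j: "j \<in> {1..N}"
    have "s * R j = 0 \<or> s * R j < (\<Sum>i\<in>I. lam i * r i j / t i)"
    proof (cases "R j = 0")
      case False
      with rates[OF j] have "s * R j < R j" using s by simp
      with rates[OF j] show ?thesis by linarith
    qed simp
    then show "0 \<le> shrink s j \<and> (shrink s j = 0 \<or> shrink s j < (\<Sum>i\<in>I. lam i * r i j / t i))"
      unfolding shrink_def using j rates[OF j] s by simp
  qed
  then have "\<forall>n. shrink (real n / real (Suc n)) \<in> {R. achievable N K S A C R}"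
    by simp
  moreover have "continuous_on UNIV (\<lambda>s. shrink s j)" for j
  proof (cases "j \<in> {1..N}")
    case True
    then show ?thesis unfolding shrink_def if_P[OF True] by (simp add: continuous_on_mult_right)
  next
    case False
    then show ?thesis unfolding shrink_def if_not_P[OF False] by simp
  qed
  then have "continuous_on UNIV shrink"
    by (rule continuous_on_coordinatewise_then_product)
  then have "(\<lambda>n. shrink (real n / real (Suc n))) \<longlonglongrightarrow> shrink 1"
    by (rule continuous_on_tendsto_compose[OF _ LIMSEQ_n_over_Suc_n]) auto
  moreover have "shrink 1 = R"
    unfolding shrink_def by auto
  ultimately show ?thesis
    unfolding capacity_region_def closure_sequential by auto
qed

end

section \<open>Converse\<close>

definition correctly_decoded ::
  "nat \<Rightarrow> nat \<Rightarrow> (nat \<Rightarrow> nat set) \<Rightarrow> (nat \<Rightarrow> nat set) \<Rightarrow> (nat \<Rightarrow> real) \<Rightarrow> nat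
   \<Rightarrow> (nat \<Rightarrow> (nat \<Rightarrow> nat) \<Rightarrow> nat) \<Rightarrow> (nat \<Rightarrow> (nat \<Rightarrow> nat) \<Rightarrow> (nat \<Rightarrow> nat) \<Rightarrow> nat) \<Rightarrow> (nat \<Rightarrow> nat) set" where
  "correctly_decoded N K S A R n f g =
     {m \<in> msg_tuples N n R. \<forall>j\<in>{1..N}. g j (broadcast K S f m) (restrict m (A j)) = m j}"

lemma finite_msg_tuples: "finite (msg_tuples N n R)"
  unfolding msg_tuples_def idx_set_def by (intro finite_PiE) auto

lemma card_msg_tuples: "card (msg_tuples N n R) = (\<Prod>j\<in>{1..N}. 2 ^ nat \<lfloor>real n * R j\<rfloor>)"
  unfolding msg_tuples_def idx_set_def by (simp add: card_PiE)

lemma error_prob_eq: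
  "error_prob N K S A R n f g =
     1 - real (card (correctly_decoded N K S A R n f g)) / real (card (msg_tuples N n R))"
proof -
  let ?M = "msg_tuples N n R" and ?D = "correctly_decoded N K S A R n f g"
  have D: "?D \<subseteq> ?M"
    unfolding correctly_decoded_def by auto
  have "{m \<in> ?M. \<exists>j\<in>{1..N}. g j (broadcast K S f m) (restrict m (A j)) \<noteq> m j} = ?M - ?D"
    unfolding correctly_decoded_def by auto
  moreover have "real (card (?M - ?D)) = real (card ?M) - real (card ?D)"
    using D finite_msg_tuples by (simp add: card_Diff_subset finite_subset card_mono)
  moreover have "card ?M > 0"
    unfolding card_msg_tuples by simp
  ultimately show ?thesis
    unfolding error_prob_def by (simp add: diff_divide_distrib)
qed

fun decodes_in_order :: "(nat \<Rightarrow> nat set) \<Rightarrow> nat set \<Rightarrow> nat list \<Rightarrow> bool" where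
  "decodes_in_order A X [] \<longleftrightarrow> True"
| "decodes_in_order A X (j # js) \<longleftrightarrow> A j \<subseteq> X \<and> decodes_in_order A (insert j X) js"

lemma correctly_decoded_agree:
  assumes m: "m \<in> correctly_decoded N K S A R n f g" and m': "m' \<in> correctly_decoded N K S A R n f g"
    and L: "broadcast K S f m = broadcast K S f m'"
  shows "decodes_in_order A X js \<Longrightarrow> set js \<subseteq> {1..N} \<Longrightarrow> \<forall>i\<in>X. m i = m' i \<Longrightarrow>
    \<forall>i\<in>X \<union> set js. m i = m' i"
proof (induction js arbitrary: X)
  case (Cons j js)
  then have j: "j \<in> {1..N}" and "restrict m (A j) = restrict m' (A j)"
    by (auto intro: restrict_ext)
  then have "m j = m' j"
    using m m' L unfolding correctly_decoded_def by fastforce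
  with Cons.prems have "decodes_in_order A (insert j X) js" and "set js \<subseteq> {1..N}"
    and "\<forall>i\<in>insert j X. m i = m' i" by simp_all
  then have "\<forall>i\<in>insert j X \<union> set js. m i = m' i"
    by (rule Cons.IH)
  then show ?case by simp
qed simp

lemma card_correctly_decoded_le:
  assumes valid: "valid_code N K S C R n f"
    and X: "X \<subseteq> {1..N}" and s: "s \<subseteq> {1..K}" and silent: "\<forall>k\<in>{1..K} - s. S k \<subseteq> X"
    and order: "decodes_in_order A X js" "set js \<subseteq> {1..N}" "{1..N} \<subseteq> X \<union> set js"
  shows "card (correctly_decoded N K S A R n f g)
    \<le> (\<Prod>j\<in>X. 2 ^ nat \<lfloor>real n * R j\<rfloor>) * (\<Prod>k\<in>s. 2 ^ nat \<lfloor>real n * C k\<rfloor>)"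
proof -
  let ?D = "correctly_decoded N K S A R n f g"
  \<comment> \<open>A correctly decoded tuple is determined by its messages in \<open>X\<close> and the indices sent on the links in \<open>s\<close>.\<close>
  define key where "key m = (restrict m X, restrict (\<lambda>k. f k (restrict m (S k))) s)" for m
  have restrict_eqD: "f1 i = f2 i" if "restrict f1 I = restrict f2 I" "i \<in> I" for f1 f2 :: "nat \<Rightarrow> nat" and I i
    using that by (metis restrict_apply')
  have "inj_on key ?D"
  proof (rule inj_onI)
    fix m m' assume m: "m \<in> ?D" and m': "m' \<in> ?D" and "key m = key m'"
    then have eqs: "restrict m X = restrict m' X"
      "restrict (\<lambda>k. f k (restrict m (S k))) s = restrict (\<lambda>k. f k (restrict m' (S k))) s"
      unfolding key_def by simp_all
    have agree: "\<forall>i\<in>X. m i = m' i"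
      using restrict_eqD[OF eqs(1)] by blast
    have "f k (restrict m (S k)) = f k (restrict m' (S k))" if "k \<in> {1..K}" for k
    proof (cases "k \<in> s")
      case True
      then show ?thesis using restrict_eqD[OF eqs(2)] by blast
    next
      case False
      with silent that have "S k \<subseteq> X" by blast
      with agree have "restrict m (S k) = restrict m' (S k)" by (intro restrict_ext) blast
      then show ?thesis by simp
    qed
    then have "broadcast K S f m = broadcast K S f m'"
      unfolding broadcast_def by (intro restrict_ext) blast
    from correctly_decoded_agree[OF m m' this order(1,2) agree]
    have "\<forall>i\<in>{1..N}. m i = m' i" using order(3) by blast
    moreover have "m \<in> msg_tuples N n R" "m' \<in> msg_tuples N n R"
      using m m' unfolding correctly_decoded_def by auto
    ultimately show "m = m'"
      unfolding msg_tuples_def by (intro PiE_ext) auto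
  qed
  moreover have "key ` ?D \<subseteq> PiE X (\<lambda>j. idx_set n (R j)) \<times> PiE s (\<lambda>k. idx_set n (C k))"
    using valid X s unfolding key_def correctly_decoded_def msg_tuples_def valid_code_def
    by (auto simp: PiE_iff)
  moreover have "finite (PiE X (\<lambda>j. idx_set n (R j)) \<times> PiE s (\<lambda>k. idx_set n (C k)))"
    using X s by (intro finite_cartesian_product finite_PiE) (auto simp: idx_set_def finite_subset)
  ultimately have "card ?D \<le> card (PiE X (\<lambda>j. idx_set n (R j)) \<times> PiE s (\<lambda>k. idx_set n (C k)))"
    using card_inj_on_le by blast
  also have "\<dots> = (\<Prod>j\<in>X. 2 ^ nat \<lfloor>real n * R j\<rfloor>) * (\<Prod>k\<in>s. 2 ^ nat \<lfloor>real n * C k\<rfloor>)"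
    using X s by (simp add: card_cartesian_product card_PiE idx_set_def finite_subset)
  finally show ?thesis .
qed


lemma correctly_decoded_fraction_le:
  assumes valid: "valid_code N K S C R n f"
    and X: "X \<subseteq> {1..N}" and s: "s \<subseteq> {1..K}" and silent: "\<forall>k\<in>{1..K} - s. S k \<subseteq> X"
    and order: "decodes_in_order A X js" "set js \<subseteq> {1..N}" "{1..N} \<subseteq> X \<union> set js"
    and C: "\<forall>k\<in>s. 0 \<le> C k"
  shows "real (card (correctly_decoded N K S A R n f g)) / real (card (msg_tuples N n R))
    \<le> 2 powr (real n * ((\<Sum>k\<in>s. C k) - (\<Sum>j\<in>{1..N} - X. R j)) + N)"
proof -
  define b where "b j = nat \<lfloor>real n * R j\<rfloor>" for j
  define c where "c k = nat \<lfloor>real n * C k\<rfloor>" for k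
  define P where "P = (\<Prod>j\<in>X. 2 ^ b j :: nat)"
  have fin: "finite X" "finite s" "finite ({1..N} - X)"
    using X s finite_subset by auto
  have "card (msg_tuples N n R) = (\<Prod>j\<in>X \<union> ({1..N} - X). 2 ^ b j)"
    unfolding card_msg_tuples b_def using X by (simp add: Un_absorb1)
  also have "\<dots> = P * (\<Prod>j\<in>{1..N} - X. 2 ^ b j)"
    unfolding P_def by (rule prod.union_disjoint) (use fin in auto)
  also have "\<dots> = P * 2 ^ (\<Sum>j\<in>{1..N} - X. b j)"
    by (simp add: power_sum)
  finally have M: "card (msg_tuples N n R) = P * 2 ^ (\<Sum>j\<in>{1..N} - X. b j)" .
  have D: "card (correctly_decoded N K S A R n f g) \<le> P * 2 ^ (\<Sum>k\<in>s. c k)"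
    using card_correctly_decoded_le[OF valid X s silent order] unfolding P_def b_def c_def
    by (simp add: power_sum)
  have "P > 0" unfolding P_def by (simp add: prod_pos)
  have "real (card (correctly_decoded N K S A R n f g)) / real (card (msg_tuples N n R))
      \<le> real (P * 2 ^ (\<Sum>k\<in>s. c k)) / real (P * 2 ^ (\<Sum>j\<in>{1..N} - X. b j))"
    unfolding M using D by (intro divide_right_mono) (simp_all only: of_nat_le_iff of_nat_0_le_iff)
  also have "\<dots> = 2 ^ (\<Sum>k\<in>s. c k) / 2 ^ (\<Sum>j\<in>{1..N} - X. b j)"
    using \<open>P > 0\<close> by simp
  also have "\<dots> = 2 powr (real (\<Sum>k\<in>s. c k) - real (\<Sum>j\<in>{1..N} - X. b j))"
    unfolding powr_diff by (simp only: powr_realpow[of 2] zero_less_numeral)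
  also have "\<dots> \<le> 2 powr (real n * ((\<Sum>k\<in>s. C k) - (\<Sum>j\<in>{1..N} - X. R j)) + N)"
  proof (rule powr_mono)
    have "real (\<Sum>k\<in>s. c k) \<le> (\<Sum>k\<in>s. real n * C k)"
      unfolding of_nat_sum c_def using C by (intro sum_mono) simp
    moreover have "(\<Sum>j\<in>{1..N} - X. real n * R j - 1) \<le> real (\<Sum>j\<in>{1..N} - X. b j)"
      unfolding of_nat_sum b_def by (intro sum_mono) linarith
    moreover have "real (card ({1..N} - X)) \<le> N"
      using card_mono[OF _ Diff_subset, of "{1..N}" X] by simp
    ultimately show "real (\<Sum>k\<in>s. c k) - real (\<Sum>j\<in>{1..N} - X. b j)
        \<le> real n * ((\<Sum>k\<in>s. C k) - (\<Sum>j\<in>{1..N} - X. R j)) + N"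
      by (simp add: sum_subtractf sum_distrib_left right_diff_distrib)
  qed simp
  finally show ?thesis .
qed

theorem achievable_decoding_bound:
  assumes ach: "achievable N K S A C R"
    and X: "X \<subseteq> {1..N}" and s: "s \<subseteq> {1..K}" and silent: "\<forall>k\<in>{1..K} - s. S k \<subseteq> X"
    and order: "decodes_in_order A X js" "set js \<subseteq> {1..N}" "{1..N} \<subseteq> X \<union> set js"
    and C: "\<forall>k\<in>s. 0 \<le> C k"
  shows "(\<Sum>j\<in>{1..N} - X. R j) \<le> (\<Sum>k\<in>s. C k)"
proof (rule ccontr)
  define e where "e = (\<Sum>j\<in>{1..N} - X. R j) - (\<Sum>k\<in>s. C k)"
  assume "\<not> ?thesis"
  then have e: "0 < e" unfolding e_def by simp
  obtain f g where valid: "\<And>n. valid_code N K S C R n (f n)"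
    and err: "(\<lambda>n. error_prob N K S A R n (f n) (g n)) \<longlonglongrightarrow> 0"
    using ach unfolding achievable_def by blast
  \<comment> \<open>The fraction of correctly decoded tuples is at most \<open>2 powr (N - n e)\<close>, which tends to \<open>0\<close>.\<close>
  have "eventually (\<lambda>n. 1 / 2 \<le> error_prob N K S A R n (f n) (g n)) sequentially"
    unfolding eventually_sequentially
  proof (intro exI allI impI)
    fix n assume "nat \<lceil>(N + 1) / e\<rceil> \<le> n"
    then have "real N + 1 \<le> real n * e" using e by (simp add: divide_le_eq)
    then have "2 powr (real n * ((\<Sum>k\<in>s. C k) - (\<Sum>j\<in>{1..N} - X. R j)) + N) \<le> 2 powr (- 1)"
      unfolding e_def by (intro powr_mono) (simp_all add: algebra_simps)
    moreover have "(2::real) powr (- 1) = 1 / 2"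
      by (simp add: powr_minus)
    ultimately show "1 / 2 \<le> error_prob N K S A R n (f n) (g n)"
      using correctly_decoded_fraction_le[OF valid X s silent order C, of n "g n"]
      unfolding error_prob_eq by linarith
  qed
  moreover have "eventually (\<lambda>n. error_prob N K S A R n (f n) (g n) < 1 / 2) sequentially"
    using order_tendstoD(2)[OF err, of "1 / 2"] by simp
  ultimately have "eventually (\<lambda>n. False) sequentially"
    by eventually_elim simp
  then show False by simp
qed

section \<open>The instance\<close>

definition rate_polytope :: "(nat \<Rightarrow> real) set" where
  "rate_polytope = {R. (\<forall>j\<in>{1..5}. R j \<ge> 0) \<and>
     R 3 \<le> 2 \<and> R 5 \<le> 1 \<and> R 1 + R 3 \<le> 3 \<and> R 1 + R 5 \<le> 2 \<and> R 4 + R 5 \<le> 2 \<and>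
     R 1 + R 2 + R 5 \<le> 3 \<and> R 1 + R 4 + R 5 \<le> 3 \<and> R 2 + R 4 + R 5 \<le> 3 \<and> R 3 + R 4 + R 5 \<le> 3}"

lemma closed_rate_polytope: "closed rate_polytope"
proof -
  have coord: "continuous_on UNIV (\<lambda>R :: nat \<Rightarrow> real. R i)" for i
    by simp
  have "closed {R :: nat \<Rightarrow> real. \<forall>j\<in>{1..5}. 0 \<le> R j}"
    unfolding Collect_ball_eq by (intro closed_INT ballI closed_Collect_le continuous_on_const coord)
  then show ?thesis
    unfolding rate_polytope_def
    by (intro closed_Collect_conj closed_Collect_le continuous_on_add continuous_on_const coord)
qed

lemma dominated_by_corners:
  fixes R :: "nat \<Rightarrow> real"
  assumes nn: "0 \<le> R 1" "0 \<le> R 2" "0 \<le> R 3" "0 \<le> R 4" "0 \<le> R 5"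
    and region: "R 3 \<le> 2" "R 5 \<le> 1" "R 1 + R 3 \<le> 3" "R 1 + R 5 \<le> 2" "R 4 + R 5 \<le> 2"
      "R 1 + R 2 + R 5 \<le> 3" "R 1 + R 4 + R 5 \<le> 3" "R 2 + R 4 + R 5 \<le> 3" "R 3 + R 4 + R 5 \<le> 3"
  shows "\<exists>l0 l1 l2 l3 l4 l5 l6 l7 l8.
    0 \<le> l0 \<and> 0 \<le> l1 \<and> 0 \<le> l2 \<and> 0 \<le> l3 \<and> 0 \<le> l4 \<and> 0 \<le> l5 \<and> 0 \<le> l6 \<and> 0 \<le> l7 \<and> 0 \<le> l8 \<and>
    l0 + l1 + l2 + l3 + l4 + l5 + l6 + l7 + l8 \<le> 1 \<and>
    R 1 \<le> l2 + l3 + l4 + l5 + 3/2 * l6 + 3/2 * l7 + 2 * l8 \<and>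
    R 2 \<le> 2 * l0 + 3 * l1 + l2 + l3 + l4 + 2 * l5 + l6 + 3/2 * l7 + l8 \<and>
    R 3 \<le> 2 * l0 + 2 * l1 + l2 + l3 + 2 * l4 + 2 * l5 + 3/2 * l6 + 3/2 * l7 + l8 \<and>
    R 4 \<le> l2 + 2 * l3 + l5 + l6 + 3/2 * l7 + l8 \<and>
    R 5 \<le> l0 + l2 + l4 + 1/2 * l6"
proof -
  \<comment> \<open>Fourier--Motzkin: the weights are fixed in the order \<open>l8, \<dots>, l0\<close>, each as the largest of its
    lower bounds once the weights still unfixed are eliminated; argo then checks all cases of the maxima.\<close>
  define l8 :: real where
    "l8 = max (2 * R 1 - 3) 0"
  define l7 :: real where
    "l7 = max (2 * R 1 + 2 * R 2 + 2 * R 4 + 2 * R 5 - 8) (max (2 * R 1 + R 2 + R 4 - l8 - 5)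
    (max (4 * R 1 + 2 * R 4 - 2 * l8 - 8) (max (4 * R 1 + 2 * R 2 - 2 * l8 - 8)
    (max (2 * R 1 + 2 * R 3 + 2 * R 4 - 8) 0))))"
  define l6 :: real where
    "l6 = max (2 * R 1 - l7 - 2 * l8 - 2) 0"
  define l5 :: real where
    "l5 = max (2 * R 1 + R 2 - l6 - 3/2 * l7 - 2 * l8 - 3) (max (2 * R 3 + R 4 - 1/2 * l7 + l8 - 4)
    (max (R 1 + R 2 + R 3 + R 4 + R 5 - 1/2 * l6 - l7 - 5) 0))"
  define l4 :: real where
    "l4 = max (R 1 + R 3 - l5 - l6 - l7 - l8 - 2) 0"
  define l3 :: real where
    "l3 = max (R 3 + R 4 - l5 - 1/2 * l6 - l7 - 2) (max (R 4 + l4 - 1/2 * l7 - 1)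
    (max (1/2 * R 2 + R 4 + l4 - 1/2 * l5 - 3/4 * l7 - 3/2) 0))"
  define l2 :: real where
    "l2 = max (R 1 - l3 - l4 - l5 - 3/2 * l6 - 3/2 * l7 - 2 * l8)
    (max (R 4 - 2 * l3 - l5 - l6 - 3/2 * l7 - l8) 0)"
  define l1 :: real where
    "l1 = max (R 2 + l2 + l3 + l4 + l6 + 1/2 * l7 + l8 - 2) 0"
  define l0 :: real where
    "l0 = max (1/2 * R 2 - 3/2 * l1 - 1/2 * l2 - 1/2 * l3 - 1/2 * l4 - l5 - 1/2 * l6 - 3/4 * l7 - 1/2 * l8)
    (max (1/2 * R 3 - l1 - 1/2 * l2 - 1/2 * l3 - l4 - l5 - 3/4 * l6 - 3/4 * l7 - 1/2 * l8)
    (max (R 5 - l2 - l4 - 1/2 * l6) 0))"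
  note [[argo_timeout = 300]]
  show ?thesis
    by (rule exI[of _ l0], rule exI[of _ l1], rule exI[of _ l2], rule exI[of _ l3], rule exI[of _ l4],
        rule exI[of _ l5], rule exI[of _ l6], rule exI[of _ l7], rule exI[of _ l8])
      (use nn region l0_def l1_def l2_def l3_def l4_def l5_def l6_def l7_def l8_def
        in \<open>unfold max_def; argo\<close>)
qed

definition rates :: "nat list \<Rightarrow> nat \<Rightarrow> nat" where
  "rates xs j = nth_default 0 (0 # xs) j"

lemma atLeastAtMost_1_3: "{1..3::nat} = {1,2,3}" and atLeastAtMost_1_5: "{1..5::nat} = {1,2,3,4,5}"
  by auto

text \<open>The corner points of the region, each with a code achieving it: the message bits \<open>xs\<close> are sent in
  \<open>t\<close> uses of the unit-capacity links.\<close>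

definition corner_codes :: "(nat list \<times> nat) list" where
  "corner_codes = [([0,2,2,0,1], 1), ([0,3,2,0,0], 1), ([1,1,1,1,1], 1), ([1,1,1,2,0], 1), ([1,1,2,0,1], 1),
     ([1,2,2,1,0], 1), ([3,2,3,2,1], 2), ([3,3,3,3,0], 2), ([2,1,1,1,0], 1)]"

locale example_instance =
  fixes S A :: "nat \<Rightarrow> nat set"
  assumes S: "S 1 = {1,2,3}" "S 2 = {2,3,4}" "S 3 = {1,2,4,5}"
    and A: "A 1 = {4,5}" "A 2 = {1,3,5}" "A 3 = {1,2}" "A 4 = {2,3,5}" "A 5 = {3}"
begin

lemma S1: "S (Suc 0) = {1,2,3}" and A1: "A (Suc 0) = {4,5}"
  using S A by simp_all

text \<open>The simplifier writes \<open>1\<close> as \<open>Suc 0\<close>, and \<open>upt_rec\<close> produces \<open>Suc (Suc 0)\<close>.\<close>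

lemmas instance_simps = rates_def nth_default_def upt_rec numeral_2_eq_2[symmetric] S S1 A A1

sublocale index_coding 5 3 S A
  by unfold_locales (unfold atLeastAtMost_1_3 atLeastAtMost_1_5, auto simp: S S1 A A1)

text \<open>In the codes below \<open>M j i\<close> is bit \<open>i\<close> of message \<open>j\<close>, \<open>L k i\<close> is bit \<open>i\<close> broadcast by sender \<open>k\<close>,
  and \<open>\<noteq>\<close> on truth values is exclusive or.\<close>

lemma corner_code_02201: "zero_error_code 5 3 S A (rates [0,2,2,0,1]) (\<lambda>_. 1)"
  by (rule zero_error_code_of_bit_lists[where
        enc = "\<lambda>k M. [[M 2 0 \<noteq> M 3 0],
                      [M 2 1 \<noteq> M 3 1],
                      [M 5 0]] ! (k - 1)" and
        dec = "\<lambda>j L M. [[],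
                        [L 1 0 \<noteq> M 3 0, L 2 0 \<noteq> M 3 1],
                        [L 1 0 \<noteq> M 2 0, L 2 0 \<noteq> M 2 1],
                        [],
                        [L 3 0]] ! (j - 1)"])
     (simp_all only: atLeastAtMost_1_3 atLeastAtMost_1_5, auto simp: instance_simps)

lemma corner_code_03200: "zero_error_code 5 3 S A (rates [0,3,2,0,0]) (\<lambda>_. 1)"
  by (rule zero_error_code_of_bit_lists[where
        enc = "\<lambda>k M. [[M 2 2 \<noteq> M 3 1],
                      [M 2 1 \<noteq> M 3 0],
                      [M 2 0]] ! (k - 1)" and
        dec = "\<lambda>j L M. [[],
                        [L 3 0, L 2 0 \<noteq> M 3 0, L 1 0 \<noteq> M 3 1],
                        [L 2 0 \<noteq> M 2 1, L 1 0 \<noteq> M 2 2],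
                        [],
                        []] ! (j - 1)"])
     (simp_all only: atLeastAtMost_1_3 atLeastAtMost_1_5, auto simp: instance_simps)

lemma corner_code_11111: "zero_error_code 5 3 S A (rates [1,1,1,1,1]) (\<lambda>_. 1)"
  by (rule zero_error_code_of_bit_lists[where
        enc = "\<lambda>k M. [[M 1 0 \<noteq> (M 2 0 \<noteq> M 3 0)],
                      [M 2 0 \<noteq> (M 3 0 \<noteq> M 4 0)],
                      [M 5 0]] ! (k - 1)" and
        dec = "\<lambda>j L M. [[L 1 0 \<noteq> (L 2 0 \<noteq> M 4 0)],
                        [L 1 0 \<noteq> (M 1 0 \<noteq> M 3 0)],
                        [L 1 0 \<noteq> (M 1 0 \<noteq> M 2 0)],
                        [L 2 0 \<noteq> (M 2 0 \<noteq> M 3 0)],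
                        [L 3 0]] ! (j - 1)"])
     (simp_all only: atLeastAtMost_1_3 atLeastAtMost_1_5, auto simp: instance_simps)

lemma corner_code_11120: "zero_error_code 5 3 S A (rates [1,1,1,2,0]) (\<lambda>_. 1)"
  by (rule zero_error_code_of_bit_lists[where
        enc = "\<lambda>k M. [[M 1 0 \<noteq> (M 2 0 \<noteq> M 3 0)],
                      [M 4 0],
                      [M 1 0 \<noteq> M 4 1]] ! (k - 1)" and
        dec = "\<lambda>j L M. [[L 3 0 \<noteq> M 4 1],
                        [L 1 0 \<noteq> (M 1 0 \<noteq> M 3 0)],
                        [L 1 0 \<noteq> (M 1 0 \<noteq> M 2 0)],
                        [L 2 0, L 1 0 \<noteq> (L 3 0 \<noteq> (M 2 0 \<noteq> M 3 0))],
                        []] ! (j - 1)"])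
     (simp_all only: atLeastAtMost_1_3 atLeastAtMost_1_5, auto simp: instance_simps)

lemma corner_code_11201: "zero_error_code 5 3 S A (rates [1,1,2,0,1]) (\<lambda>_. 1)"
  by (rule zero_error_code_of_bit_lists[where
        enc = "\<lambda>k M. [[M 1 0 \<noteq> M 3 0],
                      [M 2 0 \<noteq> M 3 1],
                      [M 1 0 \<noteq> M 5 0]] ! (k - 1)" and
        dec = "\<lambda>j L M. [[L 3 0 \<noteq> M 5 0],
                        [L 2 0 \<noteq> M 3 1],
                        [L 1 0 \<noteq> M 1 0, L 2 0 \<noteq> M 2 0],
                        [],
                        [L 1 0 \<noteq> (L 3 0 \<noteq> M 3 0)]] ! (j - 1)"])
     (simp_all only: atLeastAtMost_1_3 atLeastAtMost_1_5, auto simp: instance_simps)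

lemma corner_code_12210: "zero_error_code 5 3 S A (rates [1,2,2,1,0]) (\<lambda>_. 1)"
  by (rule zero_error_code_of_bit_lists[where
        enc = "\<lambda>k M. [[M 1 0 \<noteq> (M 2 1 \<noteq> M 3 0)],
                      [M 2 0 \<noteq> M 3 1],
                      [M 1 0 \<noteq> M 4 0]] ! (k - 1)" and
        dec = "\<lambda>j L M. [[L 3 0 \<noteq> M 4 0],
                        [L 2 0 \<noteq> M 3 1, L 1 0 \<noteq> (M 1 0 \<noteq> M 3 0)],
                        [L 1 0 \<noteq> (M 1 0 \<noteq> M 2 1), L 2 0 \<noteq> M 2 0],
                        [L 1 0 \<noteq> (L 3 0 \<noteq> (M 2 1 \<noteq> M 3 0))],
                        []] ! (j - 1)"])
     (simp_all only: atLeastAtMost_1_3 atLeastAtMost_1_5, auto simp: instance_simps)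

lemma corner_code_32321: "zero_error_code 5 3 S A (rates [3,2,3,2,1]) (\<lambda>_. 2)"
  by (rule zero_error_code_of_bit_lists[where
        enc = "\<lambda>k M. [[M 1 1 \<noteq> (M 1 2 \<noteq> M 3 1), M 1 0 \<noteq> (M 2 0 \<noteq> M 3 0)],
                      [M 2 1 \<noteq> (M 3 2 \<noteq> M 4 0), M 2 0 \<noteq> (M 3 0 \<noteq> M 4 1)],
                      [M 1 1 \<noteq> (M 1 2 \<noteq> M 5 0), M 1 1 \<noteq> M 4 0]] ! (k - 1)" and
        dec = "\<lambda>j L M. [[L 1 1 \<noteq> (L 2 1 \<noteq> M 4 1), L 3 1 \<noteq> M 4 0, L 3 0 \<noteq> (L 3 1 \<noteq> (M 4 0 \<noteq> M 5 0))],
                        [L 1 1 \<noteq> (M 1 0 \<noteq> M 3 0), L 2 0 \<noteq> (L 3 1 \<noteq> (M 1 1 \<noteq> M 3 2))],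
                        [L 1 1 \<noteq> (M 1 0 \<noteq> M 2 0), L 1 0 \<noteq> (M 1 1 \<noteq> M 1 2), L 2 0 \<noteq> (L 3 1 \<noteq> (M 1 1 \<noteq> M 2 1))],
                        [L 2 0 \<noteq> (M 2 1 \<noteq> M 3 2), L 2 1 \<noteq> (M 2 0 \<noteq> M 3 0)],
                        [L 1 0 \<noteq> (L 3 0 \<noteq> M 3 1)]] ! (j - 1)"])
     (simp_all only: atLeastAtMost_1_3 atLeastAtMost_1_5, auto simp: instance_simps)

lemma corner_code_33330: "zero_error_code 5 3 S A (rates [3,3,3,3,0]) (\<lambda>_. 2)"
  by (rule zero_error_code_of_bit_lists[where
        enc = "\<lambda>k M. [[M 1 2 \<noteq> (M 2 1 \<noteq> M 3 2), M 1 1 \<noteq> (M 2 2 \<noteq> M 3 0)],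
                      [M 2 1 \<noteq> (M 3 2 \<noteq> M 4 2), M 2 0 \<noteq> (M 3 1 \<noteq> M 4 0)],
                      [M 1 1 \<noteq> M 4 1, M 1 0 \<noteq> M 4 0]] ! (k - 1)" and
        dec = "\<lambda>j L M. [[L 3 1 \<noteq> M 4 0, L 3 0 \<noteq> M 4 1, L 1 0 \<noteq> (L 2 0 \<noteq> M 4 2)],
                        [L 2 1 \<noteq> (L 3 1 \<noteq> (M 1 0 \<noteq> M 3 1)), L 1 0 \<noteq> (M 1 2 \<noteq> M 3 2), L 1 1 \<noteq> (M 1 1 \<noteq> M 3 0)],
                        [L 1 1 \<noteq> (M 1 1 \<noteq> M 2 2), L 2 1 \<noteq> (L 3 1 \<noteq> (M 1 0 \<noteq> M 2 0)), L 1 0 \<noteq> (M 1 2 \<noteq> M 2 1)],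
                        [L 2 1 \<noteq> (M 2 0 \<noteq> M 3 1), L 1 1 \<noteq> (L 3 0 \<noteq> (M 2 2 \<noteq> M 3 0)), L 2 0 \<noteq> (M 2 1 \<noteq> M 3 2)],
                        []] ! (j - 1)"])
     (simp_all only: atLeastAtMost_1_3 atLeastAtMost_1_5, auto simp: instance_simps)

lemma corner_code_21110: "zero_error_code 5 3 S A (rates [2,1,1,1,0]) (\<lambda>_. 1)"
  by (rule zero_error_code_of_bit_lists[where
        enc = "\<lambda>k M. [[M 1 1],
                      [M 2 0 \<noteq> (M 3 0 \<noteq> M 4 0)],
                      [M 1 0 \<noteq> M 4 0]] ! (k - 1)" and
        dec = "\<lambda>j L M. [[L 3 0 \<noteq> M 4 0, L 1 0],
                        [L 2 0 \<noteq> (L 3 0 \<noteq> (M 1 0 \<noteq> M 3 0))],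
                        [L 2 0 \<noteq> (L 3 0 \<noteq> (M 1 0 \<noteq> M 2 0))],
                        [L 2 0 \<noteq> (M 2 0 \<noteq> M 3 0)],
                        []] ! (j - 1)"])
     (simp_all only: atLeastAtMost_1_3 atLeastAtMost_1_5, auto simp: instance_simps)

lemma zero_error_code_corner:
  "c \<in> set corner_codes \<Longrightarrow> zero_error_code 5 3 S A (rates (fst c)) (\<lambda>_. snd c)"
  unfolding corner_codes_def
  using corner_code_02201 corner_code_03200 corner_code_11111 corner_code_11120 corner_code_11201
    corner_code_12210 corner_code_32321 corner_code_33330 corner_code_21110
  by auto

lemma achievable_in_rate_polytope:
  assumes ach: "achievable 5 3 S A C R" and C: "C 1 = 1" "C 2 = 1" "C 3 = 1"
  shows "R \<in> rate_polytope"
proof -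
  have C1: "C (Suc 0) = 1" using C by simp
  have bound: "(\<Sum>j\<in>{1,2,3,4,5} - X. R j) \<le> (\<Sum>k\<in>s. C k)"
    if "X \<subseteq> {1,2,3,4,5}" "s \<subseteq> {1,2,3}" "\<forall>k\<in>{1,2,3} - s. S k \<subseteq> X"
      "decodes_in_order A X js" "set js \<subseteq> {1,2,3,4,5}" "{1,2,3,4,5} \<subseteq> X \<union> set js" for X s js
  proof (rule achievable_decoding_bound[OF ach, unfolded atLeastAtMost_1_3 atLeastAtMost_1_5, OF that])
    show "\<forall>k\<in>s. 0 \<le> C k" using \<open>s \<subseteq> {1,2,3}\<close> C C1 by auto
  qed
  note simps = insert_Diff_if S S1 A A1 C C1
  \<comment> \<open>For each inequality: the messages in \<open>X\<close> and the links in \<open>s\<close> let the listed receivers decode in turn.\<close>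
  have "R 3 \<le> 2"
    using bound[of "{1,2,4,5}" "{1,2}" "[3]"] by (simp add: simps)
  moreover have "R 5 \<le> 1"
    using bound[of "{1,2,3,4}" "{3}" "[5]"] by (simp add: simps)
  moreover have "R 1 + R 3 \<le> 3"
    using bound[of "{2,4,5}" "{1,2,3}" "[1,3]"] by (simp add: simps)
  moreover have "R 1 + R 5 \<le> 2"
    using bound[of "{2,3,4}" "{1,3}" "[5,1]"] by (simp add: simps)
  moreover have "R 4 + R 5 \<le> 2"
    using bound[of "{1,2,3}" "{2,3}" "[5,4]"] by (simp add: simps)
  moreover have "R 1 + R 2 + R 5 \<le> 3"
    using bound[of "{3,4}" "{1,2,3}" "[5,1,2]"] by (simp add: simps)
  moreover have "R 1 + R 4 + R 5 \<le> 3"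
    using bound[of "{2,3}" "{1,2,3}" "[5,4,1]"] by (simp add: simps)
  moreover have "R 2 + R 4 + R 5 \<le> 3"
    using bound[of "{1,3}" "{1,2,3}" "[5,2,4]"] by (simp add: simps)
  moreover have "R 3 + R 4 + R 5 \<le> 3"
    using bound[of "{1,2}" "{1,2,3}" "[3,5,4]"] by (simp add: simps)
  moreover have "\<forall>j\<in>{1..5}. 0 \<le> R j"
    using ach unfolding achievable_def by blast
  ultimately show ?thesis
    unfolding rate_polytope_def by blast
qed

lemma rate_polytope_subset_capacity_region:
  assumes C: "C 1 = 1" "C 2 = 1" "C 3 = 1"
  shows "rate_polytope \<subseteq> capacity_region 5 3 S A C"
proof
  fix R assume R: "R \<in> rate_polytope"
  have nn: "0 \<le> R 1" "0 \<le> R 2" "0 \<le> R 3" "0 \<le> R 4" "0 \<le> R 5"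
    and region: "R 3 \<le> 2" "R 5 \<le> 1" "R 1 + R 3 \<le> 3" "R 1 + R 5 \<le> 2" "R 4 + R 5 \<le> 2"
      "R 1 + R 2 + R 5 \<le> 3" "R 1 + R 4 + R 5 \<le> 3" "R 2 + R 4 + R 5 \<le> 3" "R 3 + R 4 + R 5 \<le> 3"
    using R unfolding rate_polytope_def by auto
  obtain l0 l1 l2 l3 l4 l5 l6 l7 l8 where l:
    "0 \<le> l0" "0 \<le> l1" "0 \<le> l2" "0 \<le> l3" "0 \<le> l4" "0 \<le> l5" "0 \<le> l6" "0 \<le> l7" "0 \<le> l8"
    "l0 + l1 + l2 + l3 + l4 + l5 + l6 + l7 + l8 \<le> 1"
    "R 1 \<le> l2 + l3 + l4 + l5 + 3/2 * l6 + 3/2 * l7 + 2 * l8"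
    "R 2 \<le> 2 * l0 + 3 * l1 + l2 + l3 + l4 + 2 * l5 + l6 + 3/2 * l7 + l8"
    "R 3 \<le> 2 * l0 + 2 * l1 + l2 + l3 + 2 * l4 + 2 * l5 + 3/2 * l6 + 3/2 * l7 + l8"
    "R 4 \<le> l2 + 2 * l3 + l5 + l6 + 3/2 * l7 + l8"
    "R 5 \<le> l0 + l2 + l4 + 1/2 * l6"
    using dominated_by_corners[OF nn region] by (elim exE conjE) (rule that; assumption)
  define lam where "lam i = [l0, l1, l2, l3, l4, l5, l6, l7, l8] ! i" for i
  have C1: "C (Suc 0) = 1" using C by simp
  have sum9: "(\<Sum>i<9. f i) = f 0 + f 1 + f 2 + f 3 + f 4 + f 5 + f 6 + f 7 + f 8" for f :: "nat \<Rightarrow> real"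
    by (simp add: lessThan_nat_numeral)
  show "R \<in> capacity_region 5 3 S A C"
  proof (rule capacity_region_time_sharing[where I = "{..<9}" and r = "\<lambda>i. rates (fst (corner_codes ! i))"
        and u = "\<lambda>i _. snd (corner_codes ! i)" and t = "\<lambda>i. snd (corner_codes ! i)" and lam = lam])
    show "zero_error_code 5 3 S A (rates (fst (corner_codes ! i))) (\<lambda>_. snd (corner_codes ! i))"
      if "i \<in> {..<9}" for i
      using that by (intro zero_error_code_corner nth_mem) (simp add: corner_codes_def)
    show "0 < snd (corner_codes ! i)" if "i \<in> {..<9}" for i
      using that by (auto simp: corner_codes_def lessThan_nat_numeral)
    show "real (snd (corner_codes ! i)) \<le> real (snd (corner_codes ! i)) * C k" if "k \<in> {1..3}" for i k
      using that C C1 unfolding atLeastAtMost_1_3 by auto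
    show "0 \<le> C k" if "k \<in> {1..3}" for k
      using that C C1 unfolding atLeastAtMost_1_3 by auto
    show "0 \<le> lam i" if "i \<in> {..<9}" for i
      using that l(1-9) by (auto simp: lam_def lessThan_nat_numeral)
    show "(\<Sum>i\<in>{..<9}. lam i) \<le> 1"
      using l(10) by (simp add: sum9 lam_def)
    show "0 \<le> R j \<and> R j \<le> (\<Sum>i\<in>{..<9}. lam i * rates (fst (corner_codes ! i)) j / snd (corner_codes ! i))"
      if "j \<in> {1..5}" for j
      using that nn l(11-15) unfolding atLeastAtMost_1_5
      by (auto simp: sum9 lam_def corner_codes_def rates_def nth_default_def)
  qed simp
qed

lemma capacity_region_eq_rate_polytope:
  assumes "C 1 = 1" "C 2 = 1" "C 3 = 1"
  shows "capacity_region 5 3 S A C = rate_polytope"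
proof
  show "capacity_region 5 3 S A C \<subseteq> rate_polytope"
    unfolding capacity_region_def using closed_rate_polytope achievable_in_rate_polytope[OF _ assms]
    by (intro closure_minimal) auto
  show "rate_polytope \<subseteq> capacity_region 5 3 S A C"
    by (rule rate_polytope_subset_capacity_region[OF assms])
qed

end

theorem mainTheorem7:
  fixes S A :: "nat \<Rightarrow> nat set" and C :: "nat \<Rightarrow> real"
  assumes "S 1 = {1,2,3}" "S 2 = {2,3,4}" "S 3 = {1,2,4,5}"
    and "C 1 = 1" "C 2 = 1" "C 3 = 1"
    and "A 1 = {4,5}" "A 2 = {1,3,5}" "A 3 = {1,2}" "A 4 = {2,3,5}" "A 5 = {3}"
  shows "capacity_region 5 3 S A C =
    {R. (\<forall>j\<in>{1..5}. R j \<ge> 0) \<and>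
        R 3 \<le> 2 \<and> R 5 \<le> 1 \<and> R 1 + R 3 \<le> 3 \<and> R 1 + R 5 \<le> 2 \<and> R 4 + R 5 \<le> 2 \<and>
        R 1 + R 2 + R 5 \<le> 3 \<and> R 1 + R 4 + R 5 \<le> 3 \<and> R 2 + R 4 + R 5 \<le> 3 \<and>
        R 3 + R 4 + R 5 \<le> 3}"
proof -
  interpret example_instance S A
    using assms(1-3,7-11) by unfold_locales
  show ?thesis
    using capacity_region_eq_rate_polytope[OF assms(4-6)] unfolding rate_polytope_def .
qed

end
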